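(* Let $f:[0,1]\to\mathbb{R}$ with $f(0),f(1)\in\mathbb{Z}$, let $n\in\mathbb{N}_+$, $n\ge 2$, and let $\Phi_n:[0,1]\to\mathbb{R}$ satisfy \[ \Phi_n\left(\tfrac{k+2}{n}\right)-2\Phi_n\left(\tfrac{k+1}{n}\right)+\Phi_n\left(\tfrac{k}{n}\right)\ge 2\binom{n}{k+1}^{-1},\quad k=0,\dots,n-2. \] If $f(x)+\Phi_n(x)$ is concave on $[0,1]$, then $\widetilde{B}_n(f)$ is concave on $[0,1]$.
   Context: For $n\in\mathbb{N}_+$ and $f:[0,1]\to\mathbb{R}$, $\widetilde{B}_n(f)(x):=\sum_{k=0}^n \left[f\left(\frac{k}{n}\right)\binom{n}{k}\right]x^k(1-x)^{n-k}$, where $[\alpha]$ is the largest integer $\le\alpha$. *)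

theory Defs
  imports "HOL-Analysis.Analysis"
begin

definition tilde_bernstein :: "nat \<Rightarrow> (real \<Rightarrow> real) \<Rightarrow> real \<Rightarrow> real" where
  "tilde_bernstein n f x =
     (\<Sum>k=0..n. real_of_int \<lfloor>f (real k / real n) * real (n choose k)\<rfloor> * x ^ k * (1 - x) ^ (n - k))"

end

theory Submission
  imports Defs
begin

text \<open>Write \<open>tilde_bernstein n f\<close> as the Bernstein polynomial with coefficients
  \<open>c k = \<lfloor>f(k/n) C(n,k)\<rfloor> / C(n,k)\<close>. Its second derivative is
  \<open>n(n-1) \<Sum> (c(k+2) - 2 c(k+1) + c k) B(n-2,k)\<close>, so it is concave on \<open>[0,1]\<close> as soon as
  all second differences of \<open>c\<close> are nonpositive. Rounding down gives \<open>c k \<le> f(k/n)\<close> and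
  \<open>c(k+1) > f((k+1)/n) - 1/C(n,k+1)\<close>; midpoint concavity of \<open>f + \<Phi>\<close> then bounds the second
  difference of \<open>c\<close> by \<open>2/C(n,k+1)\<close> minus the second difference of \<open>\<Phi>\<close>, which is
  nonpositive by hypothesis.\<close>

definition Bernstein_poly :: "nat \<Rightarrow> (nat \<Rightarrow> real) \<Rightarrow> real \<Rightarrow> real" where
  "Bernstein_poly n c x = (\<Sum>k\<le>n. c k * Bernstein n k x)"

lemma has_real_derivative_Bernstein_Suc:
  "(Bernstein (Suc m) k has_real_derivative
     real (Suc m) * ((if k = 0 then 0 else Bernstein m (k - 1) x) - Bernstein m k x)) (at x)"
proof (cases k)
  case 0
  show ?thesis
    unfolding 0 Bernstein_def by (rule derivative_eq_intros refl | simp)+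
next
  case (Suc j)
  have lower: "real (Suc j) * real (Suc m choose Suc j) = real (Suc m) * real (m choose j)"
    by (metis Suc_times_binomial of_nat_mult)
  have upper: "real (m - j) * real (Suc m choose Suc j) = real (Suc m) * real (m choose Suc j)"
    using binomial_absorb_comp[of "Suc m" "Suc j"] by (metis diff_Suc_Suc diff_Suc_1 of_nat_mult)
  have "(Bernstein (Suc m) (Suc j) has_real_derivative
      (real (Suc j) * real (Suc m choose Suc j)) * x ^ j * (1 - x) ^ (m - j)
      - (real (m - j) * real (Suc m choose Suc j)) * x ^ Suc j * (1 - x) ^ (m - Suc j)) (at x)"
    unfolding Bernstein_def by (rule derivative_eq_intros refl | simp)+
  then show ?thesis
    unfolding Suc lower upper by (simp add: Bernstein_def algebra_simps)
qed

lemma has_real_derivative_Bernstein_poly_Suc: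
  "(Bernstein_poly (Suc m) c has_real_derivative
     real (Suc m) * Bernstein_poly m (\<lambda>k. c (Suc k) - c k) x) (at x)"
proof -
  let ?lower = "\<lambda>k. if k = 0 then 0 else Bernstein m (k - 1) x"
  have "(Bernstein_poly (Suc m) c has_real_derivative
      (\<Sum>k\<le>Suc m. c k * (real (Suc m) * (?lower k - Bernstein m k x)))) (at x)"
    unfolding Bernstein_poly_def
    by (intro DERIV_sum DERIV_cmult has_real_derivative_Bernstein_Suc)
  also have "(\<Sum>k\<le>Suc m. c k * (real (Suc m) * (?lower k - Bernstein m k x)))
      = real (Suc m) * ((\<Sum>k\<le>Suc m. c k * ?lower k) - (\<Sum>k\<le>Suc m. c k * Bernstein m k x))"
    by (simp add: sum_distrib_left sum_subtractf algebra_simps)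
  also have "(\<Sum>k\<le>Suc m. c k * ?lower k) = (\<Sum>k\<le>m. c (Suc k) * Bernstein m k x)"
    by (subst sum.atMost_Suc_shift) simp
  also have "(\<Sum>k\<le>Suc m. c k * Bernstein m k x) = (\<Sum>k\<le>m. c k * Bernstein m k x)"
    by (simp add: Bernstein_def)
  also have "(\<Sum>k\<le>m. c (Suc k) * Bernstein m k x) - (\<Sum>k\<le>m. c k * Bernstein m k x)
      = Bernstein_poly m (\<lambda>k. c (Suc k) - c k) x"
    by (simp add: Bernstein_poly_def sum_subtractf left_diff_distrib)
  finally show ?thesis .
qed

lemma concave_on_Bernstein_poly:
  assumes "\<And>k. k + 2 \<le> n \<Longrightarrow> c (k + 2) - 2 * c (k + 1) + c k \<le> 0"
  shows "concave_on {0..1} (Bernstein_poly n c)"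
proof (cases "n < 2")
  case True
  then consider "n = 0" | "n = 1" by linarith
  then show ?thesis
  proof cases
    case 1
    then have "Bernstein_poly n c = (\<lambda>x. c 0)"
      by (simp add: Bernstein_poly_def Bernstein_def fun_eq_iff)
    then show ?thesis by (simp add: concave_on_const)
  next
    case 2
    then have "Bernstein_poly n c = (\<lambda>x. c 0 + (c 1 - c 0) * x)"
      by (simp add: Bernstein_poly_def Bernstein_def fun_eq_iff algebra_simps)
    then show ?thesis
      by simp (intro f''_le0_imp_concave derivative_eq_intros | simp)+
  qed
next
  case False
  then obtain m where n: "n = Suc (Suc m)"
    by (metis add_2_eq_Suc le_Suc_ex not_less)
  let ?d2c = "\<lambda>k. (c (Suc (Suc k)) - c (Suc k)) - (c (Suc k) - c k)"
  show ?thesis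
    unfolding n
  proof (rule f''_le0_imp_concave)
    fix x :: real
    show "(Bernstein_poly (Suc (Suc m)) c has_real_derivative
        real (Suc (Suc m)) * Bernstein_poly (Suc m) (\<lambda>k. c (Suc k) - c k) x) (at x)"
      by (rule has_real_derivative_Bernstein_poly_Suc)
    show "((\<lambda>x. real (Suc (Suc m)) * Bernstein_poly (Suc m) (\<lambda>k. c (Suc k) - c k) x)
        has_real_derivative real (Suc (Suc m)) * (real (Suc m) * Bernstein_poly m ?d2c x)) (at x)"
      by (intro DERIV_cmult has_real_derivative_Bernstein_poly_Suc)
    assume "x \<in> {0..1}"
    then have "Bernstein_poly m ?d2c x \<le> 0"
      unfolding Bernstein_poly_def
      using assms by (intro sum_nonpos mult_nonpos_nonneg)
        (auto simp: Bernstein_nonneg n eval_nat_numeral algebra_simps)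
    then show "real (Suc (Suc m)) * (real (Suc m) * Bernstein_poly m ?d2c x) \<le> 0"
      by (simp add: mult_nonneg_nonpos)
  qed simp
qed

lemma concave_on_midpoint:
  fixes g :: "real \<Rightarrow> real"
  assumes "concave_on S g" and "x \<in> S" and "y \<in> S"
  shows "g x + g y \<le> 2 * g ((x + y) / 2)"
proof -
  have "(1 - 1 / 2) *\<^sub>R x + (1 / 2) *\<^sub>R y = (x + y) / 2"
    by simp
  then show ?thesis
    using concave_onD[OF assms(1), of "1 / 2" x y] assms(2,3) by (simp add: add_divide_distrib)
qed

lemma floor_quotient_second_difference_nonpos:
  fixes a0 a1 a2 p0 p1 p2 C0 C1 C2 :: real
  assumes "C0 > 0" and "C1 > 0" and "C2 > 0"
    and concave: "(a0 + p0) + (a2 + p2) \<le> 2 * (a1 + p1)"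
    and margin: "p2 - 2 * p1 + p0 \<ge> 2 / C1"
  shows "\<lfloor>a2 * C2\<rfloor> / C2 - 2 * (\<lfloor>a1 * C1\<rfloor> / C1) + \<lfloor>a0 * C0\<rfloor> / C0 \<le> 0"
proof -
  have "\<lfloor>a0 * C0\<rfloor> / C0 \<le> a0" and "\<lfloor>a2 * C2\<rfloor> / C2 \<le> a2"
    using assms(1,3) by (simp_all add: divide_le_eq)
  moreover have "a1 * C1 - 1 < \<lfloor>a1 * C1\<rfloor>"
    by linarith
  then have "(a1 * C1 - 1) / C1 < \<lfloor>a1 * C1\<rfloor> / C1"
    using assms(2) by (rule divide_strict_right_mono)
  moreover have "(a1 * C1 - 1) / C1 = a1 - 1 / C1" and "2 / C1 = 2 * (1 / C1)"
    using assms(2) by (simp_all add: diff_divide_distrib)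
  ultimately show ?thesis
    using concave margin by (smt (verit))
qed

theorem proposition3p2:
  fixes f \<Phi> :: "real \<Rightarrow> real" and n :: nat
  assumes "f 0 \<in> \<int>" and "f 1 \<in> \<int>"
    and "n \<ge> 2"
    and "\<And>k. k \<le> n - 2 \<Longrightarrow>
           \<Phi> (real (k + 2) / real n) - 2 * \<Phi> (real (k + 1) / real n) + \<Phi> (real k / real n)
             \<ge> 2 / real (n choose (k + 1))"
    and "concave_on {0..1} (\<lambda>x. f x + \<Phi> x)"
  shows "concave_on {0..1} (tilde_bernstein n f)"
proof -
  define c where "c k = \<lfloor>f (real k / real n) * real (n choose k)\<rfloor> / real (n choose k)" for k
  have "tilde_bernstein n f = Bernstein_poly n c"
    by (auto simp: fun_eq_iff tilde_bernstein_def Bernstein_poly_def Bernstein_def c_def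
        atLeast0AtMost intro!: sum.cong)
  moreover have "c (k + 2) - 2 * c (k + 1) + c k \<le> 0" if "k + 2 \<le> n" for k
  proof -
    let ?x = "\<lambda>j. real j / real n"
    have "(?x k + ?x (k + 2)) / 2 = ?x (k + 1)"
      using that by (simp add: field_simps)
    moreover have "?x k \<in> {0..1}" and "?x (k + 2) \<in> {0..1}"
      using that by auto
    ultimately have "(f (?x k) + \<Phi> (?x k)) + (f (?x (k + 2)) + \<Phi> (?x (k + 2)))
        \<le> 2 * (f (?x (k + 1)) + \<Phi> (?x (k + 1)))"
      using concave_on_midpoint[OF assms(5)] by metis
    moreover have "\<Phi> (?x (k + 2)) - 2 * \<Phi> (?x (k + 1)) + \<Phi> (?x k) \<ge> 2 / real (n choose (k + 1))"
      using assms(4)[of k] that by simp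
    moreover have "real (n choose j) > 0" if "j \<le> n" for j
      using that by simp
    ultimately show ?thesis
      unfolding c_def using that by (intro floor_quotient_second_difference_nonpos) auto
  qed
  ultimately show ?thesis
    using concave_on_Bernstein_poly by metis
qed

end
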